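(* Let $S\subset\mathbb{R}^n$ and $U_0\subset\mathbb{R}^{n\times n}$ be polyhedra (a safety region and an initial uncertainty set) and let $A_\star\in U_0$ be the unknown true matrix. Then one-step safe learning is possible if and only if the One-Step Safe Learning Algorithm described below, run with an arbitrary choice of cost vector $c\in\mathbb{R}^n$ and an arbitrary constant $\varepsilon\in(0,1]$, returns a matrix (rather than declaring that one-step safe learning is impossible).
   Context: System: $x_{t+1}=A_\star x_t$ with $A_\star$ unknown, $A_\star\in U_0$. Given measurements $(x_j,y_j)$, $j=1,\dots,k$, with $y_j=A_\star x_j$, let $U_k=\{A\in U_0\mid Ax_j=y_j,\ j=1,\dots,k\}$ and let $S^1_k=\{x\in S\mid Ax\in S\ \forall A\in U_k\}$ (the set of points that are one-step safe under all matrices consistent with the data). Definition (one-step safe learning). One-step safe learning is possible if for some nonnegative integer $m$ one can sequentially choose vectors $x_k\in S$, $k=1,\dots,m$ (each choice may depend on the previous observations), observing $y_k=A_\star x_k$ after each choice, such that (1) (safety) for $k=1,\dots,m$, $Ax_k\in S$ for all $A\in U_{k-1}$, and (2) (learning) $U_m$ is a singleton. One-Step Safe Learning Algorithm (input $S,U_0,c,\varepsilon$). For $k=0,1,\dots,n-1$: (a) if $U_k$ is a singleton, return its unique element; (b) let $x_k^\star$ be an optimal solution of $\min\{c^Tx \mid x\in S^1_k\}$ (a linear program); (c) if $x_k^\star$ is linearly independent from $\{x_1,\dots,x_k\}$, set $x_{k+1}=x_k^\star$; otherwise compute a basis $B_k\subset S^1_k$ of $\mathrm{span}(S^1_k)$,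 and if some $z\in B_k$ is linearly independent from $\{x_1,\dots,x_k\}$, set $x_{k+1}=(1-\varepsilon)x_k^\star+\varepsilon z$ for the first such $z$, while if no element of $B_k$ is linearly independent from $\{x_1,\dots,x_k\}$, stop and declare that one-step safe learning is impossible; (d) observe $y_{k+1}=A_\star x_{k+1}$. If the loop completes, let $X=[x_1,\dots,x_n]$, $Y=[y_1,\dots,y_n]$ and return $YX^{-1}$. *)

theory Defs
  imports "HOL-Analysis.Analysis"
begin

text \<open>State space R^n is modelled as real^'n (n = CARD('n)), matrices as real^'n^'n.\<close>

definition Uset :: "(real^'n^'n) set \<Rightarrow> real^'n^'n \<Rightarrow> (real^'n) list \<Rightarrow> (real^'n^'n) set" where
  "Uset U0 Astar xs = {A \<in> U0. \<forall>j < length xs. A *v (xs ! j) = Astar *v (xs ! j)}"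

definition S1 :: "(real^'n) set \<Rightarrow> (real^'n^'n) set \<Rightarrow> (real^'n) set" where
  "S1 S U = {x \<in> S. \<forall>A \<in> U. A *v x \<in> S}"

definition one_step_safe_learnable ::
  "(real^'n) set \<Rightarrow> (real^'n^'n) set \<Rightarrow> real^'n^'n \<Rightarrow> bool" where
  "one_step_safe_learnable S U0 Astar \<longleftrightarrow>
     (\<exists>xs :: (real^'n) list.
        (\<forall>k < length xs. xs ! k \<in> S \<and>
            (\<forall>A \<in> Uset U0 Astar (take k xs). A *v (xs ! k) \<in> S)) \<and>
        (\<exists>A. Uset U0 Astar xs = {A}))"

definition lp_opt :: "real^'n \<Rightarrow> (real^'n) set \<Rightarrow> real^'n \<Rightarrow> bool" where
  "lp_opt c P x \<longleftrightarrow> x \<in> P \<and> (\<forall>y \<in> P. c \<bullet> x \<le> c \<bullet> y)"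

definition basis_list_of :: "(real^'n) set \<Rightarrow> (real^'n) list \<Rightarrow> bool" where
  "basis_list_of P B \<longleftrightarrow> distinct B \<and> set B \<subseteq> P \<and> independent (set B) \<and> span (set B) = span P"

datatype 'm alg_outcome = Returns 'm | Impossible

text \<open>Matrix X whose columns are the vectors of the list xs (length n), in a fixed
  enumeration of the index type; Y X^{-1} does not depend on this enumeration.\<close>
definition col_idx :: "'n::finite \<Rightarrow> nat" where
  "col_idx = (SOME f. bij_betw f (UNIV :: 'n set) {..<CARD('n)})"

definition colmat :: "(real^'n) list \<Rightarrow> real^'n^'n" where
  "colmat xs = (\<chi> i j. (xs ! col_idx j) $ i)"

text \<open>Runs of the One-Step Safe Learning Algorithm with inputs S, U0, c, eps against the
  true matrix Astar.  alg_run ... xs out: starting in the state where the points xs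
  (= x_1..x_k, k = length xs) have been chosen and observed, the algorithm can end
  with outcome out.  All nondeterministic choices (optimal LP solution, basis and its
  ordering) are allowed.\<close>
inductive alg_run ::
  "(real^'n) set \<Rightarrow> (real^'n^'n) set \<Rightarrow> real^'n^'n \<Rightarrow> real^'n \<Rightarrow> real
     \<Rightarrow> (real^'n) list \<Rightarrow> (real^'n^'n) alg_outcome \<Rightarrow> bool"
  for S U0 Astar c eps where
  singleton:
    "\<lbrakk>length xs < CARD('n); Uset U0 Astar xs = {A}\<rbrakk>
       \<Longrightarrow> alg_run S U0 Astar c eps xs (Returns A)"
| take_opt:
    "\<lbrakk>length xs < CARD('n); \<not> (\<exists>A. Uset U0 Astar xs = {A});
      lp_opt c (S1 S (Uset U0 Astar xs)) xstar; xstar \<notin> span (set xs);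
      alg_run S U0 Astar c eps (xs @ [xstar]) out\<rbrakk>
       \<Longrightarrow> alg_run S U0 Astar c eps xs out"
| take_mix:
    "\<lbrakk>length xs < CARD('n); \<not> (\<exists>A. Uset U0 Astar xs = {A});
      lp_opt c (S1 S (Uset U0 Astar xs)) xstar; xstar \<in> span (set xs);
      basis_list_of (S1 S (Uset U0 Astar xs)) B;
      i < length B; B ! i \<notin> span (set xs); \<forall>j < i. B ! j \<in> span (set xs);
      alg_run S U0 Astar c eps (xs @ [(1 - eps) *\<^sub>R xstar + eps *\<^sub>R (B ! i)]) out\<rbrakk>
       \<Longrightarrow> alg_run S U0 Astar c eps xs out"
| impossible:
    "\<lbrakk>length xs < CARD('n); \<not> (\<exists>A. Uset U0 Astar xs = {A});
      lp_opt c (S1 S (Uset U0 Astar xs)) xstar; xstar \<in> span (set xs);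
      basis_list_of (S1 S (Uset U0 Astar xs)) B;
      \<forall>z \<in> set B. z \<in> span (set xs)\<rbrakk>
       \<Longrightarrow> alg_run S U0 Astar c eps xs Impossible"
| complete:
    "length xs = CARD('n)
       \<Longrightarrow> alg_run S U0 Astar c eps xs
             (Returns (colmat (map (\<lambda>x. Astar *v x) xs) ** matrix_inv (colmat xs)))"

end

theory Submission
  imports Defs
begin

text \<open>Every point the algorithm queries is one-step safe and lies outside the span of the
  earlier queries; in particular the mixed point \<open>(1 - eps) x\<^sup>* + eps z\<close> stays in the convex
  set \<open>S\<^sup>1\<^sub>k\<close> and leaves the span because \<open>eps \<noteq> 0\<close>.  So a run either stops early with a
  singleton \<open>U\<^sub>k\<close> or reaches \<open>n\<close> independent safe queries, which pin down \<open>A\<^sub>\<star>\<close>: one-step safe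
  learning is possible.  Conversely, when the algorithm declares impossibility, every one-step
  safe point lies in the span of the data \<open>x\<^sub>1, \<dots>, x\<^sub>k\<close>, and since \<open>U\<^sub>k\<close> only depends on that
  span, no safe sequence of queries can ever leave it or shrink \<open>U\<^sub>k\<close>, which is not a singleton.\<close>

lemma matrix_vector_mult_eq_on_span:
  fixes A B :: "real^'n^'m"
  assumes "\<forall>x\<in>X. A *v x = B *v x" and "v \<in> span X"
  shows "A *v v = B *v v"
  using linear_eq_on_span[OF matrix_vector_mul_linear matrix_vector_mul_linear] assms
  by blast

lemma Uset_eq_span:
  "Uset U0 Astar xs = {A \<in> U0. \<forall>v \<in> span (set xs). A *v v = Astar *v v}"
proof -
  have "(\<forall>j < length xs. A *v (xs ! j) = Astar *v (xs ! j)) \<longleftrightarrow>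
        (\<forall>v \<in> span (set xs). A *v v = Astar *v v)" for A
  proof
    assume "\<forall>j < length xs. A *v (xs ! j) = Astar *v (xs ! j)"
    then have "\<forall>x \<in> set xs. A *v x = Astar *v x"
      by (auto simp: in_set_conv_nth)
    then show "\<forall>v \<in> span (set xs). A *v v = Astar *v v"
      using matrix_vector_mult_eq_on_span by blast
  next
    assume "\<forall>v \<in> span (set xs). A *v v = Astar *v v"
    then show "\<forall>j < length xs. A *v (xs ! j) = Astar *v (xs ! j)"
      by (simp add: span_base)
  qed
  then show ?thesis
    unfolding Uset_def by blast
qed

lemma Uset_antimono:
  assumes "set zs \<subseteq> span (set xs)"
  shows "Uset U0 Astar xs \<subseteq> Uset U0 Astar zs"
  using span_minimal[OF assms subspace_span] by (auto simp: Uset_eq_span)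

lemma Astar_in_Uset: "Astar \<in> U0 \<Longrightarrow> Astar \<in> Uset U0 Astar xs"
  unfolding Uset_def by simp

lemma Uset_eq_singleton_if_span_UNIV:
  assumes "span (set xs) = UNIV" and "Astar \<in> U0"
  shows "Uset U0 Astar xs = {Astar}"
  using assms by (auto simp: Uset_eq_span matrix_eq)

lemma S1_antimono: "U \<subseteq> U' \<Longrightarrow> S1 S U' \<subseteq> S1 S U"
  unfolding S1_def by auto

lemma convex_S1:
  assumes "convex S"
  shows "convex (S1 S U)"
proof -
  have "S1 S U = S \<inter> (\<Inter>A\<in>U. (\<lambda>x. A *v x) -` S)"
    unfolding S1_def by auto
  then show ?thesis
    using assms by (simp add: convex_Int convex_INT convex_linear_vimage)
qed

lemma affine_comb_notin_span:
  assumes "x \<in> span X" and "z \<notin> span X" and "u \<noteq> 0"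
  shows "(1 - u) *\<^sub>R x + u *\<^sub>R z \<notin> span X"
proof
  assume "(1 - u) *\<^sub>R x + u *\<^sub>R z \<in> span X"
  then have "(1 / u) *\<^sub>R ((1 - u) *\<^sub>R x + u *\<^sub>R z - (1 - u) *\<^sub>R x) \<in> span X"
    using assms(1) by (intro span_scale span_diff)
  then show False
    using assms(2,3) by simp
qed

definition one_step_safe_seq ::
  "(real^'n) set \<Rightarrow> (real^'n^'n) set \<Rightarrow> real^'n^'n \<Rightarrow> (real^'n) list \<Rightarrow> bool" where
  "one_step_safe_seq S U0 Astar xs \<longleftrightarrow>
     (\<forall>k < length xs. xs ! k \<in> S1 S (Uset U0 Astar (take k xs)))"

lemma one_step_safe_seq_Nil [simp]: "one_step_safe_seq S U0 Astar []"
  unfolding one_step_safe_seq_def by simp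

lemma one_step_safe_seq_snoc:
  "one_step_safe_seq S U0 Astar (xs @ [x]) \<longleftrightarrow>
     one_step_safe_seq S U0 Astar xs \<and> x \<in> S1 S (Uset U0 Astar xs)"
  unfolding one_step_safe_seq_def by (auto simp: nth_append less_Suc_eq)

lemma one_step_safe_learnable_iff:
  "one_step_safe_learnable S U0 Astar \<longleftrightarrow>
     (\<exists>xs. one_step_safe_seq S U0 Astar xs \<and> (\<exists>A. Uset U0 Astar xs = {A}))"
  unfolding one_step_safe_learnable_def one_step_safe_seq_def S1_def by blast

lemma one_step_safe_seq_in_span:
  assumes confined: "S1 S (Uset U0 Astar xs) \<subseteq> span (set xs)"
    and "one_step_safe_seq S U0 Astar zs"
  shows "set zs \<subseteq> span (set xs)"
  using assms(2)
proof (induction zs rule: rev_induct)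
  case Nil
  then show ?case by simp
next
  case (snoc z zs)
  then have zs_in_span: "set zs \<subseteq> span (set xs)"
    by (simp add: one_step_safe_seq_snoc)
  from snoc.prems have "z \<in> S1 S (Uset U0 Astar zs)"
    by (simp add: one_step_safe_seq_snoc)
  also have "\<dots> \<subseteq> S1 S (Uset U0 Astar xs)"
    by (rule S1_antimono[OF Uset_antimono[OF zs_in_span]])
  finally show ?case
    using confined zs_in_span by auto
qed

lemma not_learnable_if_S1_in_span:
  assumes confined: "S1 S (Uset U0 Astar xs) \<subseteq> span (set xs)"
    and not_singleton: "\<not> (\<exists>A. Uset U0 Astar xs = {A})"
    and "Astar \<in> U0"
  shows "\<not> one_step_safe_learnable S U0 Astar"
proof
  assume "one_step_safe_learnable S U0 Astar"
  then obtain zs A where safe: "one_step_safe_seq S U0 Astar zs" and "Uset U0 Astar zs = {A}"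
    unfolding one_step_safe_learnable_iff by blast
  then have "Uset U0 Astar xs \<subseteq> {A}"
    using Uset_antimono[OF one_step_safe_seq_in_span[OF confined safe], of U0 Astar] by simp
  moreover have "Astar \<in> Uset U0 Astar xs"
    using Astar_in_Uset[OF \<open>Astar \<in> U0\<close>] .
  ultimately have "Uset U0 Astar xs = {A}"
    by blast
  then show False
    using not_singleton by blast
qed

lemma alg_run_Impossible_not_learnable:
  fixes S :: "(real^'n) set"
  assumes "alg_run S U0 Astar c eps xs Impossible" and "Astar \<in> U0"
  shows "\<not> one_step_safe_learnable S U0 Astar"
  using assms
proof (induction xs "Impossible :: (real^'n^'n) alg_outcome" rule: alg_run.induct)
  case (impossible xs xstar B)
  have "S1 S (Uset U0 Astar xs) \<subseteq> span (set B)"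
    using \<open>basis_list_of (S1 S (Uset U0 Astar xs)) B\<close> span_superset
    unfolding basis_list_of_def by blast
  also have "\<dots> \<subseteq> span (set xs)"
    using \<open>\<forall>z \<in> set B. z \<in> span (set xs)\<close> by (intro span_minimal) auto
  finally show ?case
    using not_learnable_if_S1_in_span impossible.hyps(2) impossible.prems by blast
qed

lemma alg_run_Returns_learnable:
  fixes S :: "(real^'n) set"
  assumes "alg_run S U0 Astar c eps xs (Returns M)"
    and "Astar \<in> U0" and "convex S" and "0 < eps" and "eps \<le> 1"
    and "one_step_safe_seq S U0 Astar xs" and "distinct xs" and "independent (set xs)"
  shows "one_step_safe_learnable S U0 Astar"
  using assms
proof (induction xs "Returns M" rule: alg_run.induct)
  case (singleton xs)
  then show ?case
    by (auto simp: one_step_safe_learnable_iff)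
next
  case (take_opt xs xstar)
  have "xstar \<in> S1 S (Uset U0 Astar xs)"
    using \<open>lp_opt c _ xstar\<close> unfolding lp_opt_def by blast
  moreover have "xstar \<notin> set xs"
    using \<open>xstar \<notin> span (set xs)\<close> span_superset by blast
  ultimately show ?case
    using take_opt by (simp add: one_step_safe_seq_snoc independent_insertI)
next
  case (take_mix xs xstar B i)
  let ?P = "S1 S (Uset U0 Astar xs)"
  let ?y = "(1 - eps) *\<^sub>R xstar + eps *\<^sub>R (B ! i)"
  have xstar: "xstar \<in> ?P"
    using \<open>lp_opt c ?P xstar\<close> unfolding lp_opt_def by blast
  have basis_elem: "B ! i \<in> ?P"
    using \<open>basis_list_of ?P B\<close> \<open>i < length B\<close> unfolding basis_list_of_def by auto
  have "?y \<in> ?P"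
    using convexD[OF convex_S1[OF \<open>convex S\<close>] xstar basis_elem, of "1 - eps" eps]
      \<open>0 < eps\<close> \<open>eps \<le> 1\<close> by simp
  moreover have "?y \<notin> span (set xs)"
    using affine_comb_notin_span[OF take_mix.hyps(4,7)] \<open>0 < eps\<close> by simp
  moreover have "?y \<notin> set xs"
    using \<open>?y \<notin> span (set xs)\<close> span_superset by blast
  ultimately show ?case
    using take_mix by (simp add: one_step_safe_seq_snoc independent_insertI)
next
  case (complete xs)
  have "span (set xs) = UNIV"
    using card_eq_dim[of "set xs" UNIV] complete.hyps \<open>distinct xs\<close> \<open>independent (set xs)\<close>
    by (auto simp: distinct_card)
  then have "Uset U0 Astar xs = {Astar}"
    using Uset_eq_singleton_if_span_UNIV \<open>Astar \<in> U0\<close> by blast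
  then show ?case
    using \<open>one_step_safe_seq S U0 Astar xs\<close> unfolding one_step_safe_learnable_iff by blast
qed

theorem theorem7:
  fixes S :: "(real^'n) set" and U0 :: "(real^'n^'n) set"
    and Astar :: "real^'n^'n" and c :: "real^'n" and eps :: real
    and out :: "(real^'n^'n) alg_outcome"
  assumes "polyhedron S" and "polyhedron U0" and "Astar \<in> U0"
    and "0 < eps" and "eps \<le> 1"
    and "alg_run S U0 Astar c eps [] out"
  shows "one_step_safe_learnable S U0 Astar \<longleftrightarrow> (\<exists>M. out = Returns M)"
proof (cases out)
  case (Returns M)
  then have "one_step_safe_learnable S U0 Astar"
    using alg_run_Returns_learnable[of S U0 Astar c eps "[]" M] assms
      polyhedron_imp_convex[OF assms(1)] by (simp add: independent_empty)
  then show ?thesis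
    using Returns by simp
next
  case Impossible
  then have "\<not> one_step_safe_learnable S U0 Astar"
    using alg_run_Impossible_not_learnable[of S U0 Astar c eps "[]"] assms(3,6) by simp
  then show ?thesis
    using Impossible by simp
qed

end
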